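(* Let $\mathrm{V}=\{1,\dots,n\}$ with $n=r_1r_2$ for integers $r_1,r_2\ge2$. Then there exist a graph $\mathrm{G}$ with node set $\mathrm{V}$, a clique coverage $\mathsf{H}^\ast$ of $\mathrm{G}$ consisting only of cliques of size $r_1$ or $r_2$, and a sequence $\mathrm{Q}_0,\dots,\mathrm{Q}_{r_1+r_2-1}$ of cliques from $\mathsf{H}^\ast$, such that the clique-gossip averaging algorithm along this sequence satisfies $\mathbf{x}(r_1+r_2)=\big(\frac1n\sum_{j=1}^n\mathbf{x}_j(0)\big)\mathbf{1}$ for every initial value $\mathbf{x}(0)\in\mathbb{R}^n$; in particular it converges globally in finite time, in $r_1+r_2$ steps.
   Context: A clique of a simple undirected graph $\mathrm{G}$ on $\mathrm{V}$ is a vertex subset inducing a complete subgraph; a clique coverage is a finite set of cliques whose union is $\mathrm{V}$ and whose union of induced subgraphs is connected. The clique-gossip averaging algorithm along a sequence of cliques $\mathrm{Q}_0,\mathrm{Q}_1,\dots$ acts on $\mathbf{x}(t)\in\mathbb{R}^n$ by $\mathbf{x}_i(t+1)=\frac{1}{|\mathrm{Q}_t|}\sum_{j\in\mathrm{Q}_t}\mathbf{x}_j(t)$ if $i\in\mathrm{Q}_t$ and $\mathbf{x}_i(t+1)=\mathbf{x}_i(t)$ otherwise. $\mathbf{1}$ denotes the all-ones vector. It converges globally in finite time if for every initial value $\mathbf{x}(0)$ there is $T\ge0$ with $\mathbf{x}(T)\in\mathrm{span}\{\mathbf{1}\}$. *)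

theory Defs
  imports Complex_Main
begin

definition simple_graph :: "nat set \<Rightarrow> (nat \<Rightarrow> nat \<Rightarrow> bool) \<Rightarrow> bool" where
  "simple_graph V E \<longleftrightarrow>
     (\<forall>i j. E i j \<longrightarrow> i \<in> V \<and> j \<in> V) \<and>
     (\<forall>i j. E i j \<longrightarrow> E j i) \<and> (\<forall>i. \<not> E i i)"

definition is_clique :: "nat set \<Rightarrow> (nat \<Rightarrow> nat \<Rightarrow> bool) \<Rightarrow> nat set \<Rightarrow> bool" where
  "is_clique V E Q \<longleftrightarrow> Q \<subseteq> V \<and> (\<forall>i\<in>Q. \<forall>j\<in>Q. i \<noteq> j \<longrightarrow> E i j)"

definition union_edges :: "nat set set \<Rightarrow> nat \<Rightarrow> nat \<Rightarrow> bool" where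
  "union_edges H i j \<longleftrightarrow> i \<noteq> j \<and> (\<exists>Q\<in>H. i \<in> Q \<and> j \<in> Q)"

definition clique_coverage :: "nat set \<Rightarrow> (nat \<Rightarrow> nat \<Rightarrow> bool) \<Rightarrow> nat set set \<Rightarrow> bool" where
  "clique_coverage V E H \<longleftrightarrow>
     finite H \<and> (\<forall>Q\<in>H. is_clique V E Q) \<and> \<Union>H = V \<and>
     (\<forall>i\<in>V. \<forall>j\<in>V. (union_edges H)\<^sup>*\<^sup>* i j)"

definition gossip_step :: "nat set \<Rightarrow> (nat \<Rightarrow> real) \<Rightarrow> (nat \<Rightarrow> real)" where
  "gossip_step Q x = (\<lambda>i. if i \<in> Q then (\<Sum>j\<in>Q. x j) / real (card Q) else x i)"

primrec gossip :: "(nat \<Rightarrow> nat set) \<Rightarrow> (nat \<Rightarrow> real) \<Rightarrow> nat \<Rightarrow> (nat \<Rightarrow> real)" where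
  "gossip Qs x0 0 = x0"
| "gossip Qs x0 (Suc t) = gossip_step (Qs t) (gossip Qs x0 t)"

definition converges_finite_time :: "nat \<Rightarrow> (nat \<Rightarrow> nat set) \<Rightarrow> bool" where
  "converges_finite_time n Qs \<longleftrightarrow>
     (\<forall>x0. \<exists>T. \<exists>c::real. \<forall>i\<in>{1..n}. gossip Qs x0 T i = c)"

end

theory Submission
  imports Defs
begin

text \<open>Arrange the nodes in an \<open>r\<^sub>1 \<times> r\<^sub>2\<close> grid. Averaging the \<open>r\<^sub>2\<close> rows one after the other
  replaces every value by its row average; since each column meets every row exactly once,
  averaging the \<open>r\<^sub>1\<close> columns afterwards gives every node the mean of all row averages, which
  is the global mean. The rows and columns form a clique coverage whose union graph is
  connected through the first row and the columns.\<close>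

definition average :: "nat set \<Rightarrow> (nat \<Rightarrow> real) \<Rightarrow> real" where
  "average Q x = (\<Sum>j\<in>Q. x j) / real (card Q)"

lemma gossip_step_eq: "gossip_step Q x i = (if i \<in> Q then average Q x else x i)"
  by (simp add: gossip_step_def average_def)

lemma gossip_add: "gossip Qs x0 (s + t) = gossip (\<lambda>t. Qs (s + t)) (gossip Qs x0 s) t"
  by (induction t) simp_all

lemma gossip_frame:
  assumes "t \<le> k" and "\<And>s. t \<le> s \<Longrightarrow> s < k \<Longrightarrow> i \<notin> Qs s"
  shows "gossip Qs x0 k i = gossip Qs x0 t i"
  using assms by (induction k rule: dec_induct) (auto simp: gossip_step_eq)

lemma gossip_disjoint_average:
  assumes disjoint: "\<And>s. s < k \<Longrightarrow> s \<noteq> t \<Longrightarrow> Qs s \<inter> Qs t = {}"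
    and "t < k" and "i \<in> Qs t"
  shows "gossip Qs x0 k i = average (Qs t) x0"
proof -
  have "i \<notin> Qs s" if "Suc t \<le> s" "s < k" for s
    using disjoint[of s] that \<open>i \<in> Qs t\<close> by auto
  then have "gossip Qs x0 k i = gossip Qs x0 (Suc t) i"
    using \<open>t < k\<close> by (intro gossip_frame) auto
  also have "\<dots> = average (Qs t) (gossip Qs x0 t)"
    using \<open>i \<in> Qs t\<close> by (simp add: gossip_step_eq)
  also have "\<dots> = average (Qs t) x0"
  proof -
    have "gossip Qs x0 t j = x0 j" if "j \<in> Qs t" for j
    proof -
      have "j \<notin> Qs s" if "s < t" for s
        using disjoint[of s] that \<open>j \<in> Qs t\<close> \<open>t < k\<close> by auto
      then show ?thesis using gossip_frame[where t = 0 and k = t and i = j] by simp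
    qed
    then show ?thesis by (simp add: average_def)
  qed
  finally show ?thesis .
qed

lemma union_edges_rtranclp_in_member:
  assumes "Q \<in> H" and "i \<in> Q" and "j \<in> Q"
  shows "(union_edges H)\<^sup>*\<^sup>* i j"
proof (cases "i = j")
  case False
  then have "union_edges H i j" using assms unfolding union_edges_def by blast
  then show ?thesis by (rule r_into_rtranclp)
qed simp

lemma symp_union_edges: "symp (union_edges H)"
  by (auto simp: symp_def union_edges_def)

lemma simple_graph_union_edges: "\<Union>H \<subseteq> V \<Longrightarrow> simple_graph V (union_edges H)"
  unfolding simple_graph_def union_edges_def by blast

lemma is_clique_union_edges: "Q \<in> H \<Longrightarrow> Q \<subseteq> V \<Longrightarrow> is_clique V (union_edges H) Q"
  unfolding is_clique_def union_edges_def by blast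

definition cell :: "nat \<Rightarrow> nat \<Rightarrow> nat \<Rightarrow> nat" where
  "cell r1 a b = 1 + a + r1 * b"

definition grid_row :: "nat \<Rightarrow> nat \<Rightarrow> nat set" where
  "grid_row r1 b = (\<lambda>a. cell r1 a b) ` {..<r1}"

definition grid_col :: "nat \<Rightarrow> nat \<Rightarrow> nat \<Rightarrow> nat set" where
  "grid_col r1 r2 a = cell r1 a ` {..<r2}"

definition grid_schedule :: "nat \<Rightarrow> nat \<Rightarrow> nat \<Rightarrow> nat set" where
  "grid_schedule r1 r2 t = (if t < r2 then grid_row r1 t else grid_col r1 r2 (t - r2))"

lemma cell_eq_iff:
  assumes "a < r1" and "a' < r1"
  shows "cell r1 a b = cell r1 a' b' \<longleftrightarrow> a = a' \<and> b = b'"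
proof
  assume eq: "cell r1 a b = cell r1 a' b'"
  then have "(a + r1 * b) mod r1 = (a' + r1 * b') mod r1"
    and "(a + r1 * b) div r1 = (a' + r1 * b') div r1"
    by (simp_all add: cell_def)
  then show "a = a' \<and> b = b'" using assms by simp
qed simp

lemma cell_bounds:
  assumes "a < r1" and "b < r2"
  shows "Suc 0 \<le> cell r1 a b" and "cell r1 a b \<le> r1 * r2"
proof -
  have "a + r1 * b < r1 * Suc b" using assms by simp
  also have "\<dots> \<le> r1 * r2" using assms by (intro mult_le_mono2) simp
  finally show "cell r1 a b \<le> r1 * r2" by (simp add: cell_def)
qed (simp add: cell_def)

lemma grid_cell_cases:
  assumes "0 < r1" and "i \<in> {1..r1 * r2}"
  obtains a b where "a < r1" "b < r2" "i = cell r1 a b"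
proof
  show "(i - 1) mod r1 < r1" using \<open>0 < r1\<close> by simp
  show "(i - 1) div r1 < r2"
    using assms by (intro less_mult_imp_div_less) (auto simp: mult.commute)
  show "i = cell r1 ((i - 1) mod r1) ((i - 1) div r1)"
    using assms(2) mod_mult_div_eq[of "i - 1" r1] by (simp add: cell_def)
qed

lemma bij_betw_cell:
  assumes "0 < r1"
  shows "bij_betw (\<lambda>(a, b). cell r1 a b) ({..<r1} \<times> {..<r2}) {1..r1 * r2}"
proof (rule bij_betw_imageI)
  show "inj_on (\<lambda>(a, b). cell r1 a b) ({..<r1} \<times> {..<r2})"
    by (auto simp: inj_on_def cell_eq_iff)
  show "(\<lambda>(a, b). cell r1 a b) ` ({..<r1} \<times> {..<r2}) = {1..r1 * r2}"
  proof (intro equalityI subsetI)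
    fix i assume "i \<in> {1..r1 * r2}"
    with assms obtain a b where "a < r1" "b < r2" "i = cell r1 a b"
      by (elim grid_cell_cases)
    then show "i \<in> (\<lambda>(a, b). cell r1 a b) ` ({..<r1} \<times> {..<r2})" by force
  qed (auto simp: cell_bounds)
qed

lemma sum_grid:
  assumes "0 < r1"
  shows "(\<Sum>j=1..r1 * r2. x j) = (\<Sum>b<r2. \<Sum>a<r1. x (cell r1 a b))"
proof -
  have "(\<Sum>j=1..r1 * r2. x j) = (\<Sum>(a, b)\<in>{..<r1} \<times> {..<r2}. x (cell r1 a b))"
    using sum.reindex_bij_betw[OF bij_betw_cell[OF assms], of x] by (simp add: case_prod_beta')
  also have "\<dots> = (\<Sum>a<r1. \<Sum>b<r2. x (cell r1 a b))"
    by (simp add: sum.cartesian_product)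
  also have "\<dots> = (\<Sum>b<r2. \<Sum>a<r1. x (cell r1 a b))"
    by (rule sum.swap)
  finally show ?thesis .
qed

lemma average_grid_row:
  "average (grid_row r1 b) x = (\<Sum>a<r1. x (cell r1 a b)) / real r1"
proof -
  have "inj_on (\<lambda>a. cell r1 a b) {..<r1}" by (auto simp: inj_on_def cell_eq_iff)
  then show ?thesis by (simp add: average_def grid_row_def sum.reindex card_image)
qed

lemma average_grid_col:
  assumes "a < r1"
  shows "average (grid_col r1 r2 a) x = (\<Sum>b<r2. x (cell r1 a b)) / real r2"
proof -
  have "inj_on (cell r1 a) {..<r2}" using assms by (auto simp: inj_on_def cell_eq_iff)
  then show ?thesis by (simp add: average_def grid_col_def sum.reindex card_image)
qed

lemma card_grid_row: "card (grid_row r1 b) = r1"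
  by (simp add: grid_row_def card_image inj_on_def cell_eq_iff)

lemma card_grid_col: "a < r1 \<Longrightarrow> card (grid_col r1 r2 a) = r2"
  by (simp add: grid_col_def card_image inj_on_def cell_eq_iff)

lemma grid_rows_disjoint: "b \<noteq> b' \<Longrightarrow> grid_row r1 b \<inter> grid_row r1 b' = {}"
  by (auto simp: grid_row_def cell_eq_iff)

lemma grid_cols_disjoint:
  "a < r1 \<Longrightarrow> a' < r1 \<Longrightarrow> a \<noteq> a' \<Longrightarrow> grid_col r1 r2 a \<inter> grid_col r1 r2 a' = {}"
  by (auto simp: grid_col_def cell_eq_iff)

lemma gossip_grid_schedule:
  assumes "0 < r1" and "i \<in> {1..r1 * r2}"
  shows "gossip (grid_schedule r1 r2) x0 (r1 + r2) i = (\<Sum>j=1..r1 * r2. x0 j) / real (r1 * r2)"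
proof -
  define y where "y = gossip (grid_schedule r1 r2) x0 r2"
  have y: "y (cell r1 a b) = (\<Sum>a'<r1. x0 (cell r1 a' b)) / real r1"
    if "a < r1" "b < r2" for a b
  proof -
    have "y (cell r1 a b) = average (grid_schedule r1 r2 b) x0"
      unfolding y_def
    proof (rule gossip_disjoint_average)
      show "grid_schedule r1 r2 s \<inter> grid_schedule r1 r2 b = {}" if "s < r2" "s \<noteq> b" for s
        using that \<open>b < r2\<close> by (simp add: grid_schedule_def grid_rows_disjoint)
      show "cell r1 a b \<in> grid_schedule r1 r2 b"
        using that by (simp add: grid_schedule_def grid_row_def)
    qed (rule \<open>b < r2\<close>)
    then show ?thesis using that by (simp add: grid_schedule_def average_grid_row)
  qed
  obtain a b where ab: "a < r1" "b < r2" "i = cell r1 a b"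
    using assms by (elim grid_cell_cases)
  have "gossip (grid_schedule r1 r2) x0 (r1 + r2) i = gossip (grid_col r1 r2) y r1 i"
    by (simp only: add.commute[of r1 r2] gossip_add) (simp add: y_def grid_schedule_def)
  also have "\<dots> = average (grid_col r1 r2 a) y"
  proof (rule gossip_disjoint_average)
    show "grid_col r1 r2 s \<inter> grid_col r1 r2 a = {}" if "s < r1" "s \<noteq> a" for s
      using that ab by (simp add: grid_cols_disjoint)
    show "i \<in> grid_col r1 r2 a"
      using ab by (simp add: grid_col_def)
  qed (rule \<open>a < r1\<close>)
  also have "\<dots> = (\<Sum>b<r2. \<Sum>a'<r1. x0 (cell r1 a' b)) / real r1 / real r2"
    using ab by (simp add: average_grid_col y sum_divide_distrib)
  also have "\<dots> = (\<Sum>j=1..r1 * r2. x0 j) / real (r1 * r2)"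
    by (simp only: sum_grid[OF \<open>0 < r1\<close>] of_nat_mult divide_divide_eq_left)
  finally show ?thesis .
qed

definition grid_cliques :: "nat \<Rightarrow> nat \<Rightarrow> nat set set" where
  "grid_cliques r1 r2 = grid_row r1 ` {..<r2} \<union> grid_col r1 r2 ` {..<r1}"

lemma grid_cliques_subset: "Q \<in> grid_cliques r1 r2 \<Longrightarrow> Q \<subseteq> {1..r1 * r2}"
  by (auto simp: grid_cliques_def grid_row_def grid_col_def cell_bounds)

lemma Union_grid_cliques:
  assumes "0 < r1"
  shows "\<Union>(grid_cliques r1 r2) = {1..r1 * r2}"
proof
  show "\<Union>(grid_cliques r1 r2) \<subseteq> {1..r1 * r2}" using grid_cliques_subset by blast
  show "{1..r1 * r2} \<subseteq> \<Union>(grid_cliques r1 r2)"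
    using assms by (auto simp: grid_cliques_def grid_row_def elim!: grid_cell_cases)
qed

lemma grid_cliques_connected:
  assumes "0 < r1" and "i \<in> {1..r1 * r2}"
  shows "(union_edges (grid_cliques r1 r2))\<^sup>*\<^sup>* i 1"
proof -
  obtain a b where ab: "a < r1" "b < r2" "i = cell r1 a b"
    using assms by (elim grid_cell_cases)
  have "(union_edges (grid_cliques r1 r2))\<^sup>*\<^sup>* (cell r1 a b) (cell r1 a 0)"
    using ab by (intro union_edges_rtranclp_in_member[of "grid_col r1 r2 a"])
      (auto simp: grid_cliques_def grid_col_def)
  moreover have "(union_edges (grid_cliques r1 r2))\<^sup>*\<^sup>* (cell r1 a 0) (cell r1 0 0)"
    using ab assms by (intro union_edges_rtranclp_in_member[of "grid_row r1 0"])
      (auto simp: grid_cliques_def grid_row_def)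
  ultimately show ?thesis using ab by (simp add: cell_def)
qed

lemma clique_coverage_grid_cliques:
  assumes "0 < r1"
  shows "clique_coverage {1..r1 * r2} (union_edges (grid_cliques r1 r2)) (grid_cliques r1 r2)"
proof -
  let ?H = "grid_cliques r1 r2"
  have "(union_edges ?H)\<^sup>*\<^sup>* i j" if "i \<in> {1..r1 * r2}" "j \<in> {1..r1 * r2}" for i j
  proof -
    have "(union_edges ?H)\<^sup>*\<^sup>* 1 j"
      using grid_cliques_connected[OF assms that(2)]
      by (rule sympD[OF symp_rtranclp[OF symp_union_edges]])
    with grid_cliques_connected[OF assms that(1)] show ?thesis by (rule rtranclp_trans)
  qed
  moreover have "\<forall>Q\<in>?H. is_clique {1..r1 * r2} (union_edges ?H) Q"
    using is_clique_union_edges grid_cliques_subset by metis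
  moreover have "finite ?H" by (simp add: grid_cliques_def)
  ultimately show ?thesis
    unfolding clique_coverage_def using Union_grid_cliques[OF assms] by simp
qed

theorem theorem2:
  fixes r1 r2 n :: nat
  assumes "r1 \<ge> 2" and "r2 \<ge> 2" and "n = r1 * r2"
  shows "\<exists>E H Qs.
    simple_graph {1..n} E \<and>
    clique_coverage {1..n} E H \<and>
    (\<forall>Q\<in>H. card Q = r1 \<or> card Q = r2) \<and>
    (\<forall>t < r1 + r2. Qs t \<in> H) \<and>
    (\<forall>x0::nat \<Rightarrow> real. \<forall>i\<in>{1..n}.
        gossip Qs x0 (r1 + r2) i = (1 / real n) * (\<Sum>j=1..n. x0 j)) \<and>
    converges_finite_time n Qs"
proof -
  have r1: "0 < r1" using assms(1) by simp
  let ?H = "grid_cliques r1 r2" and ?Qs = "grid_schedule r1 r2"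
  have mean: "\<forall>x0::nat \<Rightarrow> real. \<forall>i\<in>{1..n}.
      gossip ?Qs x0 (r1 + r2) i = (1 / real n) * (\<Sum>j=1..n. x0 j)"
    using gossip_grid_schedule[OF r1] assms(3) by simp
  have "simple_graph {1..n} (union_edges ?H)"
    using assms(3) Union_grid_cliques[OF r1] by (simp add: simple_graph_union_edges)
  moreover have "clique_coverage {1..n} (union_edges ?H) ?H"
    using assms(3) clique_coverage_grid_cliques[OF r1] by simp
  moreover have "\<forall>Q\<in>?H. card Q = r1 \<or> card Q = r2"
    by (auto simp: grid_cliques_def card_grid_row card_grid_col)
  moreover have "\<forall>t < r1 + r2. ?Qs t \<in> ?H"
    by (auto simp: grid_schedule_def grid_cliques_def)
  moreover have "converges_finite_time n ?Qs"
    unfolding converges_finite_time_def using mean by blast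
  ultimately show ?thesis using mean by blast
qed

end
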